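(* Let $d<0<r<u$ be real numbers with $(1+u)(1+d)=1$, let $S_0>0$, let $T\ge 1$ be an integer, and set $q=\frac{r-d}{u-d}\in(0,1)$. Let $\mathcal{S}=\{S_0(1+u)^k(1+d)^l : k,l\in\{0,1,2,\dots\}\}=\{S_0(1+u)^j: j\in\mathbb{Z}\}$ be the (extended, infinite) state space. Let $f:\mathcal{S}\to\mathbb{R}$ be the payoff of a European-style derivative with maturity $T$, and assume that either $\sum_{K\in\mathcal{S}}|f(K)|<\infty$ or $f\ge 0$. Define the discounted value process of the replication strategy by $$V_f(s,T)=f(s),\qquad V_f(s,t)=q\,V_f\big(s(1+u),t+1\big)+(1-q)\,V_f\big(s(1+d),t+1\big)\quad (s\in\mathcal{S},\ 0\le t<T),$$ equivalently $V_f(s,t)=\sum_{x=0}^{T-t}\binom{T-t}{x}q^x(1-q)^{T-t-x}f\big(s(1+u)^x(1+d)^{T-t-x}\big)$. Then for every $t\in\{0,1,\dots,T\}$, $$\sum_{s\in\mathcal{S}}V_f(s,t)=\sum_{K\in\mathcal{S}}f(K).$$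
   Context: This is the Cox–Ross–Rubinstein binomial model with constant one-period risk-free rate $r$ and up/down returns $u,d$, but with the state space extended to all points $S_0(1+u)^j$, $j\in\mathbb{Z}$, at every time. All values are expressed in numeraire (discounted) units: a payoff of one unit at time $T$ and the amount of wealth needed at time $t$ to replicate it are measured in the time-$T$ and time-$t$ numeraire respectively, so that one-period replication costs of a unit payoff contingent on an up-move (resp. down-move) are $q$ (resp. $1-q$). $V_f(s,t)$ is the (numeraire-denominated) wealth required at time $t$ in state $s$ to replicate the payoff $f(S_T)$ at time $T$; when $f\ge0$ the sums may be $+\infty$. *)

theory Defs
  imports "HOL-Analysis.Analysis" "HOL-Library.Extended_Nonnegative_Real"
begin

definition crr_states :: "real \<Rightarrow> real \<Rightarrow> real \<Rightarrow> real set" where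
  "crr_states S0 u d = {S0 * (1 + u) ^ k * (1 + d) ^ l | k l. True}"

text \<open>Backward recursion with n periods remaining to maturity.\<close>
fun repl_val :: "real \<Rightarrow> real \<Rightarrow> real \<Rightarrow> (real \<Rightarrow> real) \<Rightarrow> nat \<Rightarrow> real \<Rightarrow> real" where
  "repl_val q u d f 0 s = f s"
| "repl_val q u d f (Suc n) s =
     q * repl_val q u d f n (s * (1 + u)) + (1 - q) * repl_val q u d f n (s * (1 + d))"

definition V_f :: "real \<Rightarrow> real \<Rightarrow> real \<Rightarrow> (real \<Rightarrow> real) \<Rightarrow> nat \<Rightarrow> real \<Rightarrow> nat \<Rightarrow> real" where
  "V_f q u d f T s t = repl_val q u d f (T - t) s"

end

theory Submission
  imports Defs
begin

text \<open>Since \<open>(1 + u) (1 + d) = 1\<close>, multiplication by \<open>1 + u\<close> and by \<open>1 + d\<close> are mutually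
  inverse permutations of the state space. One step of the backward recursion therefore replaces
  the value function by a convex combination, with weights \<open>q\<close> and \<open>1 - q\<close>, of two
  rearrangements of itself, and rearranging an absolutely convergent (or nonnegative) sum does not
  change it. Induction on the time to maturity gives the claim; of the hypotheses on \<open>d, r, u\<close>
  only \<open>0 \<le> q \<le> 1\<close> is used.\<close>

lemma bij_betw_mult_right_self:
  fixes a b :: "'a :: comm_monoid_mult"
  assumes "a * b = 1" and "\<And>x. x \<in> S \<Longrightarrow> x * a \<in> S" and "\<And>x. x \<in> S \<Longrightarrow> x * b \<in> S"
  shows "bij_betw (\<lambda>x. x * a) S S"
proof (rule bij_betwI[where g = "\<lambda>x. x * b"])
  fix x
  show "x * a * b = x" "x * b * a = x"
    using assms(1) by (metis mult.assoc mult.commute mult.right_neutral)+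
qed (use assms(2,3) in \<open>auto simp: Pi_iff\<close>)

lemma mult_mem_crr_states:
  assumes "x \<in> crr_states S0 u d"
  shows "x * (1 + u) \<in> crr_states S0 u d" and "x * (1 + d) \<in> crr_states S0 u d"
proof -
  obtain k l where x: "x = S0 * (1 + u) ^ k * (1 + d) ^ l"
    using assms unfolding crr_states_def by blast
  have "x * (1 + u) = S0 * (1 + u) ^ Suc k * (1 + d) ^ l"
       "x * (1 + d) = S0 * (1 + u) ^ k * (1 + d) ^ Suc l"
    using x by (simp_all add: algebra_simps)
  then show "x * (1 + u) \<in> crr_states S0 u d" and "x * (1 + d) \<in> crr_states S0 u d"
    unfolding crr_states_def by blast+
qed

lemma bij_betw_crr_states_shifts:
  assumes "(1 + u) * (1 + d) = 1"
  shows "bij_betw (\<lambda>s. s * (1 + u)) (crr_states S0 u d) (crr_states S0 u d)"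
    and "bij_betw (\<lambda>s. s * (1 + d)) (crr_states S0 u d) (crr_states S0 u d)"
  using assms
  by (auto intro!: bij_betw_mult_right_self mult_mem_crr_states simp: mult.commute)

text \<open>Multiplication on \<^typ>\<open>ennreal\<close> is not jointly continuous, so \<open>infsum_cmult_right\<close>
  does not apply; a finite factor suffices.\<close>

lemma infsum_cmult_right_ennreal:
  fixes h :: "'a \<Rightarrow> ennreal"
  assumes "c < top"
  shows "(\<Sum>\<^sub>\<infinity>x\<in>A. c * h x) = c * (\<Sum>\<^sub>\<infinity>x\<in>A. h x)"
proof (rule infsumI)
  have "(h has_sum infsum h A) A"
    by (intro has_sum_infsum nonneg_summable_on_complete) simp
  then have "(sum h \<longlongrightarrow> infsum h A) (finite_subsets_at_top A)"
    by (simp add: has_sum_def)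
  then have "((\<lambda>F. c * sum h F) \<longlongrightarrow> c * infsum h A) (finite_subsets_at_top A)"
    by (rule ennreal_tendsto_cmult[OF assms])
  then show "((\<lambda>x. c * h x) has_sum c * infsum h A) A"
    by (simp add: has_sum_def sum_distrib_left)
qed

lemma abs_summable_on_mix_reindex:
  fixes g :: "'a \<Rightarrow> real"
  assumes h1: "bij_betw h1 S S" and h2: "bij_betw h2 S S"
    and g: "(\<lambda>x. norm (g x)) summable_on S"
  shows "(\<lambda>x. norm (p * g (h1 x) + r * g (h2 x))) summable_on S"
proof (rule summable_on_comparison_test)
  have "(\<lambda>x. norm (g (h1 x))) summable_on S" "(\<lambda>x. norm (g (h2 x))) summable_on S"
    using g summable_on_reindex_bij_betw[OF h1, of "\<lambda>x. norm (g x)"]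
      summable_on_reindex_bij_betw[OF h2, of "\<lambda>x. norm (g x)"] by simp_all
  then show "(\<lambda>x. \<bar>p\<bar> * norm (g (h1 x)) + \<bar>r\<bar> * norm (g (h2 x))) summable_on S"
    by (intro summable_on_add summable_on_cmult_right)
  show "norm (p * g (h1 x) + r * g (h2 x))
          \<le> \<bar>p\<bar> * norm (g (h1 x)) + \<bar>r\<bar> * norm (g (h2 x))" for x
    using norm_triangle_ineq[of "p * g (h1 x)" "r * g (h2 x)"] by (simp add: abs_mult)
qed simp

lemma infsum_mix_reindex:
  fixes g :: "'a \<Rightarrow> real"
  assumes h1: "bij_betw h1 S S" and h2: "bij_betw h2 S S"
    and g: "(\<lambda>x. norm (g x)) summable_on S"
  shows "(\<Sum>\<^sub>\<infinity>x\<in>S. p * g (h1 x) + r * g (h2 x)) = (p + r) * (\<Sum>\<^sub>\<infinity>x\<in>S. g x)"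
proof -
  have "(\<lambda>x. g (h1 x)) summable_on S" "(\<lambda>x. g (h2 x)) summable_on S"
    using abs_summable_summable[OF g]
      summable_on_reindex_bij_betw[OF h1, of g] summable_on_reindex_bij_betw[OF h2, of g] by simp_all
  then have "(\<Sum>\<^sub>\<infinity>x\<in>S. p * g (h1 x) + r * g (h2 x))
      = p * (\<Sum>\<^sub>\<infinity>x\<in>S. g (h1 x)) + r * (\<Sum>\<^sub>\<infinity>x\<in>S. g (h2 x))"
    by (simp add: infsum_add summable_on_cmult_right infsum_cmult_right)
  also have "\<dots> = (p + r) * (\<Sum>\<^sub>\<infinity>x\<in>S. g x)"
    by (simp add: infsum_reindex_bij_betw[OF h1] infsum_reindex_bij_betw[OF h2] algebra_simps)
  finally show ?thesis .
qed

lemma infsum_mix_reindex_ennreal: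
  fixes g :: "'a \<Rightarrow> ennreal"
  assumes h1: "bij_betw h1 S S" and h2: "bij_betw h2 S S" and "p < top" "r < top"
  shows "(\<Sum>\<^sub>\<infinity>x\<in>S. p * g (h1 x) + r * g (h2 x)) = (p + r) * (\<Sum>\<^sub>\<infinity>x\<in>S. g x)"
proof -
  have "(\<Sum>\<^sub>\<infinity>x\<in>S. p * g (h1 x) + r * g (h2 x))
      = p * (\<Sum>\<^sub>\<infinity>x\<in>S. g (h1 x)) + r * (\<Sum>\<^sub>\<infinity>x\<in>S. g (h2 x))"
    using assms(3,4) by (simp add: infsum_add[OF nonneg_summable_on_complete nonneg_summable_on_complete]
        infsum_cmult_right_ennreal)
  also have "\<dots> = (p + r) * (\<Sum>\<^sub>\<infinity>x\<in>S. g x)"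
    by (simp add: infsum_reindex_bij_betw[OF h1] infsum_reindex_bij_betw[OF h2] distrib_right)
  finally show ?thesis .
qed

lemma repl_val_Suc_fun:
  "repl_val q u d f (Suc n) =
     (\<lambda>s. q * repl_val q u d f n (s * (1 + u)) + (1 - q) * repl_val q u d f n (s * (1 + d)))"
  by (rule ext) simp

lemma repl_val_nonneg:
  assumes "0 \<le> q" "q \<le> 1" and "\<forall>K\<in>crr_states S0 u d. f K \<ge> 0" and "s \<in> crr_states S0 u d"
  shows "repl_val q u d f n s \<ge> 0"
  using assms(4)
proof (induction n arbitrary: s)
  case (Suc n)
  then show ?case
    using assms(1,2) by (simp add: mult_mem_crr_states)
qed (use assms(3) in simp)

lemma repl_val_abs_summable_infsum:
  assumes shifts: "(1 + u) * (1 + d) = 1"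
    and f: "(\<lambda>K. norm (f K)) summable_on crr_states S0 u d"
  shows "(\<lambda>s. norm (repl_val q u d f n s)) summable_on crr_states S0 u d
     \<and> (\<Sum>\<^sub>\<infinity>s\<in>crr_states S0 u d. repl_val q u d f n s) = (\<Sum>\<^sub>\<infinity>K\<in>crr_states S0 u d. f K)"
proof (induction n)
  case (Suc n)
  then show ?case
    unfolding repl_val_Suc_fun
    using abs_summable_on_mix_reindex[OF bij_betw_crr_states_shifts[OF shifts]]
      infsum_mix_reindex[OF bij_betw_crr_states_shifts[OF shifts]]
    by simp
qed (use f in simp)

lemma repl_val_infsum_ennreal:
  assumes shifts: "(1 + u) * (1 + d) = 1" and q: "0 \<le> q" "q \<le> 1"
    and f: "\<forall>K\<in>crr_states S0 u d. f K \<ge> 0"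
  shows "(\<Sum>\<^sub>\<infinity>s\<in>crr_states S0 u d. ennreal (repl_val q u d f n s))
       = (\<Sum>\<^sub>\<infinity>K\<in>crr_states S0 u d. ennreal (f K))"
proof (induction n)
  case (Suc n)
  let ?S = "crr_states S0 u d" and ?g = "\<lambda>s. ennreal (repl_val q u d f n s)"
  have "ennreal (repl_val q u d f (Suc n) s)
      = ennreal q * ?g (s * (1 + u)) + ennreal (1 - q) * ?g (s * (1 + d))" if "s \<in> ?S" for s
    using q repl_val_nonneg[OF q f mult_mem_crr_states(1)[OF that]]
      repl_val_nonneg[OF q f mult_mem_crr_states(2)[OF that]]
    by (simp add: ennreal_plus ennreal_mult)
  then have "(\<Sum>\<^sub>\<infinity>s\<in>?S. ennreal (repl_val q u d f (Suc n) s))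
      = (\<Sum>\<^sub>\<infinity>s\<in>?S. ennreal q * ?g (s * (1 + u)) + ennreal (1 - q) * ?g (s * (1 + d)))"
    by (rule infsum_cong)
  also have "\<dots> = (ennreal q + ennreal (1 - q)) * (\<Sum>\<^sub>\<infinity>s\<in>?S. ?g s)"
    by (simp add: infsum_mix_reindex_ennreal[where g = ?g, OF bij_betw_crr_states_shifts[OF shifts]])
  also have "ennreal q + ennreal (1 - q) = 1"
    using q by (simp flip: ennreal_plus)
  finally show ?case
    using Suc by simp
qed simp

theorem proposition1:
  fixes u d r S0 q :: real and T :: nat and f :: "real \<Rightarrow> real"
  assumes "d < 0" and "0 < r" and "r < u" and "(1 + u) * (1 + d) = 1"
    and "S0 > 0" and "T \<ge> 1" and "q = (r - d) / (u - d)"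
  shows "((\<lambda>K. norm (f K)) summable_on crr_states S0 u d \<longrightarrow>
           (\<forall>t\<le>T. (\<Sum>\<^sub>\<infinity>s\<in>crr_states S0 u d. V_f q u d f T s t)
                   = (\<Sum>\<^sub>\<infinity>K\<in>crr_states S0 u d. f K)))
       \<and> ((\<forall>K\<in>crr_states S0 u d. f K \<ge> 0) \<longrightarrow>
           (\<forall>t\<le>T. (\<Sum>\<^sub>\<infinity>s\<in>crr_states S0 u d. ennreal (V_f q u d f T s t))
                   = (\<Sum>\<^sub>\<infinity>K\<in>crr_states S0 u d. ennreal (f K))))"
proof -
  have "0 \<le> q" "q \<le> 1"
    using assms(1-3,7) by (simp_all add: divide_le_eq_1)
  then show ?thesis
    unfolding V_f_def
    using repl_val_abs_summable_infsum[OF assms(4)] repl_val_infsum_ennreal[OF assms(4)]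
    by blast
qed

end
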